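(* Let $r,s,t,u,v$ be non-negative integers with $u+v=4s-2r+t^2+2t+4$. Let $G=\left(r,\,r,\,s,\,s+\binom{t+1}{2},\,s+\binom{t+2}{2},\,u\right)$ and $H=\left(r,\,r,\,s,\,s+\binom{t+1}{2},\,s+\binom{t+2}{2},\,v\right)$, with interesting factors $g(x)$ and $h(x)$ respectively. Then $$g(x)=-h(-x+6s+2t^2+4t+6).$$
   Context: All graphs are finite and simple. For integers $1\le j\le k$, a $(j,k)$-biclique is a graph whose vertex set is the disjoint union of a $j$-clique and a $k$-clique, with an arbitrary set of additional edges each joining a vertex of the $j$-clique to a vertex of the $k$-clique. For non-negative integers $a,b,c,d,e,f$, the notation $(a,b,c,d,e,f)$ denotes the $(3,k)$-biclique with $k=a+b+c+d+e+f$, whose $3$-clique is $\{v_1,v_2,v_3\}$, in which every vertex of the $k$-clique is adjacent to exactly one or exactly two of $v_1,v_2,v_3$, and exactly $a$ (resp. $b$, $c$) vertices of the $k$-clique are adjacent to $v_1$ only (resp. $v_2$ only, $v_3$ only), and exactly $d$ (resp. $e$, $f$) vertices of the $k$-clique are adjacent to exactly $v_2$ and $v_3$ (resp. exactly $v_1$ and $v_3$, exactly $v_1$ and $v_2$). This determines the graph up to isomorphism. The interesting factor of a $(3,k)$-biclique $G$ is the cubic polynomial $P_G(x)/(x)_k$, where $P_G$ is the chromatic polynomial and $(x)_k=x(x-1)\cdots(x-k+1)$. *)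

theory Defs
  imports "HOL-Library.FuncSet" "HOL-Computational_Algebra.Polynomial"
begin

text \<open>A finite simple graph is given by a finite vertex set V and a symmetric,
irreflexive adjacency relation adj (only its restriction to V matters).\<close>

definition proper_colourings :: "'v set \<Rightarrow> ('v \<Rightarrow> 'v \<Rightarrow> bool) \<Rightarrow> nat \<Rightarrow> ('v \<Rightarrow> nat) set" where
  "proper_colourings V adj n =
     {col \<in> V \<rightarrow>\<^sub>E {..<n}. \<forall>x\<in>V. \<forall>y\<in>V. adj x y \<longrightarrow> col x \<noteq> col y}"

definition chromatic_poly :: "'v set \<Rightarrow> ('v \<Rightarrow> 'v \<Rightarrow> bool) \<Rightarrow> real poly" where
  "chromatic_poly V adj =
     (THE p. \<forall>n::nat. poly p (real n) = real (card (proper_colourings V adj n)))"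

definition falling_poly :: "nat \<Rightarrow> real poly" where
  "falling_poly k = (\<Prod>i<k. [:- real i, 1:])"

type_synonym six = "nat \<times> nat \<times> nat \<times> nat \<times> nat \<times> nat"

fun bsize :: "six \<Rightarrow> nat" where
  "bsize (a,b,c,d,e,f) = a+b+c+d+e+f"

text \<open>3-clique vertices are Inl 0, Inl 1, Inl 2 (standing for v1,v2,v3);
k-clique vertices are Inr j, j < k. The set of 3-clique neighbours of Inr j.\<close>
fun bnbrs :: "six \<Rightarrow> nat \<Rightarrow> nat set" where
  "bnbrs (a,b,c,d,e,f) j =
     (if j < a then {0}
      else if j < a+b then {1}
      else if j < a+b+c then {2}
      else if j < a+b+c+d then {1,2}
      else if j < a+b+c+d+e then {0,2}
      else {0,1})"

definition bverts :: "six \<Rightarrow> (nat + nat) set" where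
  "bverts T = Inl ` {..<3} \<union> Inr ` {..<bsize T}"

fun badj :: "six \<Rightarrow> nat + nat \<Rightarrow> nat + nat \<Rightarrow> bool" where
  "badj T (Inl i) (Inl i') = (i \<noteq> i')"
| "badj T (Inr j) (Inr j') = (j \<noteq> j')"
| "badj T (Inl i) (Inr j) = (i \<in> bnbrs T j)"
| "badj T (Inr j) (Inl i) = (i \<in> bnbrs T j)"

definition interesting_factor :: "six \<Rightarrow> real poly" where
  "interesting_factor T =
     (THE q. chromatic_poly (bverts T) (badj T) = q * falling_poly (bsize T))"

end

theory Submission
  imports Defs
begin

text \<open>
  Let \<open>G\<close> be the (3,k)-biclique \<open>(a,b,c,d,e,f)\<close> with triangle \<open>v\<^sub>1 v\<^sub>2 v\<^sub>3\<close>.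
  A proper n-colouring of \<open>G\<close> is the same as an injective colouring of the
  k-clique, of which there are \<open>(n)\<^sub>k\<close>, together with a triple of distinct colours
  for \<open>v\<^sub>1, v\<^sub>2, v\<^sub>3\<close> avoiding the colours of their respective neighbourhoods.  By
  inclusion-exclusion the number of such triples depends only on the sizes of the
  neighbourhoods and their unions; with \<open>y = n - k\<close> it equals
    \<open>(y+b+c+d)(y+a+c+e)(y+a+b+f) - (y+c)(y+a+b+f) - (y+b)(y+a+c+e) - (y+a)(y+b+c+d) + 2y\<close>.
  Hence the chromatic polynomial is \<open>(x)\<^sub>k\<close> times this cubic (two polynomials agreeing
  on all naturals are equal), and the interesting factor is the cubic itself.
  The theorem is then a polynomial identity between the two cubics, using
  \<open>2 (t+1 choose 2) = t(t+1)\<close>, \<open>2 (t+2 choose 2) = (t+1)(t+2)\<close> and the hypothesis on \<open>u + v\<close>.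
\<close>

lemma card_distinct_triples:
  fixes S0 S1 S2 :: "'a set"
  assumes "finite S0" "finite S1" "finite S2"
  shows "int (card {(x,y,z). x \<in> S0 \<and> y \<in> S1 \<and> z \<in> S2 \<and> x \<noteq> y \<and> x \<noteq> z \<and> y \<noteq> z})
    = int (card S0) * int (card S1) * int (card S2)
      - int (card (S0 \<inter> S1)) * int (card S2) - int (card (S0 \<inter> S2)) * int (card S1)
      - int (card (S1 \<inter> S2)) * int (card S0) + 2 * int (card (S0 \<inter> S1 \<inter> S2))"
proof -
  define U where "U = S0 \<times> S1 \<times> S2"
  define E01 where "E01 = (\<lambda>(x,z). (x,x,z)) ` ((S0 \<inter> S1) \<times> S2)"
  define E02 where "E02 = (\<lambda>(x,y). (x,y,x)) ` ((S0 \<inter> S2) \<times> S1)"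
  define E12 where "E12 = (\<lambda>(y,x). (x,y,y)) ` ((S1 \<inter> S2) \<times> S0)"
  define D where "D = (\<lambda>x. (x,x,x)) ` (S0 \<inter> S1 \<inter> S2)"
  have triples: "{(x,y,z). x \<in> S0 \<and> y \<in> S1 \<and> z \<in> S2 \<and> x \<noteq> y \<and> x \<noteq> z \<and> y \<noteq> z}
      = U - (E01 \<union> E02 \<union> E12)"
    unfolding U_def E01_def E02_def E12_def by auto
  have sub: "E01 \<union> E02 \<union> E12 \<subseteq> U" unfolding U_def E01_def E02_def E12_def by auto
  have fin: "finite U" "finite E01" "finite E02" "finite E12"
    using assms unfolding U_def E01_def E02_def E12_def by auto
  have "card U = card S0 * card S1 * card S2"
    unfolding U_def by (simp add: card_cartesian_product)
  moreover have "card E01 = card (S0 \<inter> S1) * card S2" "card E02 = card (S0 \<inter> S2) * card S1"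
    "card E12 = card (S1 \<inter> S2) * card S0" "card D = card (S0 \<inter> S1 \<inter> S2)"
    unfolding E01_def E02_def E12_def D_def
    by (subst card_image; auto simp: inj_on_def card_cartesian_product)+
  moreover have "E01 \<inter> E02 = D" "(E01 \<union> E02) \<inter> E12 = D"
    unfolding E01_def E02_def E12_def D_def by auto
  then have "int (card (E01 \<union> E02)) = int (card E01) + int (card E02) - int (card D)"
    "int (card (E01 \<union> E02 \<union> E12)) = int (card (E01 \<union> E02)) + int (card E12) - int (card D)"
    using card_Un_Int[of E01 E02] card_Un_Int[of "E01 \<union> E02" E12] fin by simp_all
  moreover have "int (card (U - (E01 \<union> E02 \<union> E12))) = int (card U) - int (card (E01 \<union> E02 \<union> E12))"
    using card_Diff_subset[OF _ sub] card_mono[OF fin(1) sub] fin by (simp add: of_nat_diff)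
  ultimately show ?thesis unfolding triples by simp
qed

lemma poly_eqI_nat:
  fixes p q :: "real poly"
  assumes "\<And>n::nat. poly p (real n) = poly q (real n)"
  shows "p = q"
proof (rule ccontr)
  assume "p \<noteq> q"
  then have "finite {x. poly (p - q) x = 0}" by (intro poly_roots_finite) simp
  moreover have "range real \<subseteq> {x. poly (p - q) x = 0}" using assms by auto
  ultimately have "finite (range (real :: nat \<Rightarrow> real))" by (rule finite_subset[rotated])
  then show False using finite_imageD[of real UNIV] by simp
qed

lemma falling_poly_nonzero: "falling_poly k \<noteq> 0"
  unfolding falling_poly_def by (simp add: prod_zero_iff)

text \<open>Injective maps \<open>{..<k} \<rightarrow> {..<n}\<close>, i.e. proper colourings of a k-clique.\<close>
definition inj_maps :: "nat \<Rightarrow> nat \<Rightarrow> (nat \<Rightarrow> nat) set" where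
  "inj_maps k n = {g \<in> {..<k} \<rightarrow>\<^sub>E {..<n}. inj_on g {..<k}}"

lemma card_inj_maps: "real (card (inj_maps k n)) = poly (falling_poly k) (real n)"
proof -
  have "card (inj_maps k n) = prod ((-) n) {0..<k}"
    unfolding inj_maps_def using card_inj_on_subset_funcset[of "{..<k}" "{..<n}" "{..<k}"] by simp
  moreover have "real (prod ((-) n) {0..<k}) = (\<Prod>i<k. real n - real i)"
  proof (cases "k \<le> n")
    case True
    then show ?thesis by (simp add: of_nat_prod atLeast0LessThan of_nat_diff)
  next
    case False
    then have "n \<in> {0..<k}" "n \<in> {..<k}" by auto
    then have "prod ((-) n) {0..<k} = 0" "(\<Prod>i<k. real n - real i) = 0"
      by (auto intro!: prod_zero)
    then show ?thesis by (metis of_nat_0)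
  qed
  ultimately show ?thesis by (simp add: falling_poly_def poly_prod)
qed

lemma card_unused_colours:
  assumes g: "g \<in> inj_maps k n" and A: "A \<subseteq> {..<k}"
  shows "int (card ({..<n} - g ` A)) = int n - int (card A)"
proof -
  have img: "g ` A \<subseteq> {..<n}" using g A by (auto simp: inj_maps_def)
  have "inj_on g A" using g inj_on_subset[OF _ A] by (auto simp: inj_maps_def)
  then have "card (g ` A) = card A" by (rule card_image)
  then show ?thesis
    using card_Diff_subset[OF _ img] card_mono[OF _ img] finite_subset[OF img]
    by (simp add: of_nat_diff)
qed

definition cubic_factor :: "real \<Rightarrow> real \<Rightarrow> real \<Rightarrow> real \<Rightarrow> real \<Rightarrow> real \<Rightarrow> real \<Rightarrow> real" where
  "cubic_factor a b c d e f x = (let y = x - (a+b+c+d+e+f) in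
     (y+b+c+d)*(y+a+c+e)*(y+a+b+f) - (y+c)*(y+a+b+f) - (y+b)*(y+a+c+e) - (y+a)*(y+b+c+d) + 2*y)"

fun biclique_factor :: "six \<Rightarrow> real poly" where
  "biclique_factor (a,b,c,d,e,f) = (let y = [:- real (a+b+c+d+e+f), 1:] in
     (y + [:real (b+c+d):]) * (y + [:real (a+c+e):]) * (y + [:real (a+b+f):])
     - (y + [:real c:]) * (y + [:real (a+b+f):]) - (y + [:real b:]) * (y + [:real (a+c+e):])
     - (y + [:real a:]) * (y + [:real (b+c+d):]) + smult 2 y)"

lemma poly_biclique_factor:
  "poly (biclique_factor (a,b,c,d,e,f)) x = cubic_factor (real a) (real b) (real c) (real d) (real e) (real f) x"
  unfolding cubic_factor_def by (simp add: Let_def) algebra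

definition clique_nbhd :: "six \<Rightarrow> nat \<Rightarrow> nat set" where
  "clique_nbhd T i = {j. j < bsize T \<and> i \<in> bnbrs T j}"

definition triangle_colours :: "six \<Rightarrow> nat \<Rightarrow> (nat \<Rightarrow> nat) \<Rightarrow> (nat \<times> nat \<times> nat) set" where
  "triangle_colours T n g = {(x,y,z).
      x \<in> {..<n} - g ` clique_nbhd T 0 \<and> y \<in> {..<n} - g ` clique_nbhd T 1 \<and>
      z \<in> {..<n} - g ` clique_nbhd T 2 \<and> x \<noteq> y \<and> x \<noteq> z \<and> y \<noteq> z}"

definition split_colouring :: "nat \<Rightarrow> (nat + nat \<Rightarrow> nat) \<Rightarrow> (nat \<Rightarrow> nat) \<times> nat \<times> nat \<times> nat" where
  "split_colouring k col = (restrict (col \<circ> Inr) {..<k}, col (Inl 0), col (Inl 1), col (Inl 2))"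

definition join_colouring :: "(nat \<Rightarrow> nat) \<times> nat \<times> nat \<times> nat \<Rightarrow> nat + nat \<Rightarrow> nat" where
  "join_colouring = (\<lambda>(g,x,y,z) w. case w of
      Inl i \<Rightarrow> (if i = 0 then x else if i = 1 then y else if i = 2 then z else undefined)
    | Inr j \<Rightarrow> g j)"

lemma in_bverts: "w \<in> bverts T \<longleftrightarrow> (\<exists>i\<in>{0,1,2}. w = Inl i) \<or> (\<exists>j<bsize T. w = Inr j)"
  by (auto simp: bverts_def)

lemma join_colouring_proper:
  assumes g: "g \<in> inj_maps (bsize T) n" and xyz: "(x,y,z) \<in> triangle_colours T n g"
  shows "join_colouring (g,x,y,z) \<in> proper_colourings (bverts T) (badj T) n"
proof -
  let ?c = "join_colouring (g,x,y,z)"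
  have gP: "g \<in> {..<bsize T} \<rightarrow>\<^sub>E {..<n}" and gi: "inj_on g {..<bsize T}"
    using g by (auto simp: inj_maps_def)
  have tri: "?c (Inl i) \<notin> g ` clique_nbhd T i" if "i \<in> {0,1,2}" for i
    using that xyz by (auto simp: join_colouring_def triangle_colours_def)
  have "?c \<in> bverts T \<rightarrow>\<^sub>E {..<n}"
  proof
    show "?c w \<in> {..<n}" if "w \<in> bverts T" for w
      using that xyz gP by (auto simp: in_bverts join_colouring_def triangle_colours_def)
    show "?c w = undefined" if "w \<notin> bverts T" for w
      using that gP by (cases w) (auto simp: in_bverts join_colouring_def)
  qed
  moreover have "?c v \<noteq> ?c w" if "v \<in> bverts T" "w \<in> bverts T" "badj T v w" for v w
    using that xyz tri gi
    by (auto simp: in_bverts join_colouring_def triangle_colours_def clique_nbhd_def inj_on_def)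
  ultimately show ?thesis by (simp add: proper_colourings_def)
qed

lemma colourings_decompose:
  "bij_betw (split_colouring (bsize T)) (proper_colourings (bverts T) (badj T) n)
     (Sigma (inj_maps (bsize T) n) (triangle_colours T n))"
proof (rule bij_betw_byWitness[where f' = join_colouring])
  let ?k = "bsize T"
  show "\<forall>col \<in> proper_colourings (bverts T) (badj T) n. join_colouring (split_colouring ?k col) = col"
  proof
    fix col assume "col \<in> proper_colourings (bverts T) (badj T) n"
    then have ext: "col w = undefined" if "w \<notin> bverts T" for w
      using that by (auto simp: proper_colourings_def PiE_def extensional_def)
    show "join_colouring (split_colouring ?k col) = col"
    proof
      fix w show "join_colouring (split_colouring ?k col) w = col w"
        using ext[of w] by (cases w) (auto simp: join_colouring_def split_colouring_def in_bverts)
    qed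
  qed
  show "\<forall>p \<in> Sigma (inj_maps ?k n) (triangle_colours T n). split_colouring ?k (join_colouring p) = p"
    by (auto simp: join_colouring_def split_colouring_def inj_maps_def PiE_def extensional_def fun_eq_iff)
  show "split_colouring ?k ` proper_colourings (bverts T) (badj T) n
      \<subseteq> Sigma (inj_maps ?k n) (triangle_colours T n)"
  proof (rule image_subsetI)
    fix col assume "col \<in> proper_colourings (bverts T) (badj T) n"
    then have range: "col \<in> bverts T \<rightarrow>\<^sub>E {..<n}"
      and proper: "\<And>v w. v \<in> bverts T \<Longrightarrow> w \<in> bverts T \<Longrightarrow> badj T v w \<Longrightarrow> col v \<noteq> col w"
      unfolding proper_colourings_def by auto
    have tri: "Inl i \<in> bverts T" if "i < 3" for i using that by (simp add: bverts_def)
    have clq: "Inr j \<in> bverts T" if "j < ?k" for j using that by (simp add: bverts_def)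
    have "restrict (col \<circ> Inr) {..<?k} \<in> inj_maps ?k n"
      unfolding inj_maps_def using range clq proper[OF clq clq] by (auto simp: inj_on_def)
    moreover have "(col (Inl 0), col (Inl 1), col (Inl 2)) \<in> triangle_colours T n (restrict (col \<circ> Inr) {..<?k})"
      unfolding triangle_colours_def clique_nbhd_def
      using range tri clq proper[OF tri clq] proper[OF tri tri] by auto
    ultimately show "split_colouring ?k col \<in> Sigma (inj_maps ?k n) (triangle_colours T n)"
      by (simp add: split_colouring_def)
  qed
  show "join_colouring ` Sigma (inj_maps ?k n) (triangle_colours T n)
      \<subseteq> proper_colourings (bverts T) (badj T) n"
    by (auto intro!: join_colouring_proper)
qed

lemma clique_nbhds:
  fixes a b c d e f :: nat
  defines "T \<equiv> (a,b,c,d,e,f)" and "k \<equiv> a+b+c+d+e+f"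
  shows "clique_nbhd T 0 = {..<a} \<union> {a+b+c+d..<k}"
    and "clique_nbhd T 1 = {a..<a+b} \<union> {a+b+c..<a+b+c+d} \<union> {a+b+c+d+e..<k}"
    and "clique_nbhd T 2 = {a+b..<a+b+c+d+e}"
    and "clique_nbhd T 0 \<union> clique_nbhd T 1 = {..<k} - {a+b..<a+b+c}"
    and "clique_nbhd T 0 \<union> clique_nbhd T 2 = {..<k} - {a..<a+b}"
    and "clique_nbhd T 1 \<union> clique_nbhd T 2 = {..<k} - {..<a}"
    and "clique_nbhd T 0 \<union> clique_nbhd T 1 \<union> clique_nbhd T 2 = {..<k}"
  unfolding clique_nbhd_def T_def k_def by (auto split: if_splits)

text \<open>Their sizes: \<open>k\<close> minus the number of clique vertices not adjacent to them.\<close>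
lemma card_clique_nbhds:
  fixes a b c d e f :: nat
  defines "T \<equiv> (a,b,c,d,e,f)" and "k \<equiv> a+b+c+d+e+f"
  shows "card (clique_nbhd T 0) = a+e+f"
    and "card (clique_nbhd T 1) = b+d+f"
    and "card (clique_nbhd T 2) = c+d+e"
    and "card (clique_nbhd T 0 \<union> clique_nbhd T 1) = k - c"
    and "card (clique_nbhd T 0 \<union> clique_nbhd T 2) = k - b"
    and "card (clique_nbhd T 1 \<union> clique_nbhd T 2) = k - a"
    and "card (clique_nbhd T 0 \<union> clique_nbhd T 1 \<union> clique_nbhd T 2) = k"
proof -
  note nbhd = clique_nbhds[of a b c d e f, folded T_def k_def]
  show "card (clique_nbhd T 0) = a+e+f"
    unfolding nbhd by (subst card_Un_disjoint) (auto simp: k_def)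
  show "card (clique_nbhd T 1) = b+d+f"
    unfolding nbhd by (subst card_Un_disjoint, simp, simp, force)+ (auto simp: k_def)
  show "card (clique_nbhd T 2) = c+d+e"
    unfolding nbhd by simp
  show "card (clique_nbhd T 0 \<union> clique_nbhd T 1) = k - c"
    unfolding nbhd(4) by (subst card_Diff_subset) (auto simp: k_def)
  show "card (clique_nbhd T 0 \<union> clique_nbhd T 2) = k - b"
    unfolding nbhd(5) by (subst card_Diff_subset) (auto simp: k_def)
  show "card (clique_nbhd T 1 \<union> clique_nbhd T 2) = k - a"
    unfolding nbhd(6) by (subst card_Diff_subset) (auto simp: k_def)
  show "card (clique_nbhd T 0 \<union> clique_nbhd T 1 \<union> clique_nbhd T 2) = k"
    unfolding nbhd(7) by simp
qed

lemma card_triangle_colours: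
  assumes g: "g \<in> inj_maps (bsize T) n"
  shows "real (card (triangle_colours T n g)) = poly (biclique_factor T) (real n)"
proof -
  obtain a b c d e f where T: "T = (a,b,c,d,e,f)" by (cases T) auto
  define S where "S i = {..<n} - g ` clique_nbhd T i" for i
  have nbhd_sub: "clique_nbhd T i \<subseteq> {..<bsize T}" for i
    by (auto simp: clique_nbhd_def)
  have card_S1: "int (card (S i)) = int n - int (card (clique_nbhd T i))" for i
    unfolding S_def using card_unused_colours[OF g nbhd_sub] .
  have card_S2: "int (card (S i \<inter> S j)) = int n - int (card (clique_nbhd T i \<union> clique_nbhd T j))" for i j
    using card_unused_colours[OF g, of "clique_nbhd T i \<union> clique_nbhd T j"] nbhd_sub
    unfolding S_def by (simp add: image_Un Diff_Un)
  have card_S3: "int (card (S 0 \<inter> S 1 \<inter> S 2)) = int n - int (bsize T)"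
    using card_unused_colours[OF g, of "clique_nbhd T 0 \<union> clique_nbhd T 1 \<union> clique_nbhd T 2"] nbhd_sub
      card_clique_nbhds(7)[of a b c d e f, folded T]
    unfolding S_def by (simp add: image_Un Diff_Un T)
  have triples: "triangle_colours T n g = {(x,y,z). x \<in> S 0 \<and> y \<in> S 1 \<and> z \<in> S 2 \<and> x \<noteq> y \<and> x \<noteq> z \<and> y \<noteq> z}"
    unfolding triangle_colours_def S_def by simp
  have "real (card (triangle_colours T n g)) = of_int (int (card (triangle_colours T n g)))"
    by simp
  also have "int (card (triangle_colours T n g))
      = int (card (S 0)) * int (card (S 1)) * int (card (S 2))
      - int (card (S 0 \<inter> S 1)) * int (card (S 2)) - int (card (S 0 \<inter> S 2)) * int (card (S 1))
      - int (card (S 1 \<inter> S 2)) * int (card (S 0)) + 2 * int (card (S 0 \<inter> S 1 \<inter> S 2))"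
    unfolding triples by (rule card_distinct_triples) (simp_all add: S_def)
  also have "of_int \<dots> = poly (biclique_factor T) (real n)"
    unfolding card_S1 card_S2 card_S3 card_clique_nbhds[of a b c d e f, folded T]
    by (simp add: T poly_biclique_factor cubic_factor_def of_nat_diff Let_def algebra_simps)
  finally show ?thesis .
qed

text \<open>Summing the triangle count over all injective colourings of the clique.\<close>
lemma card_proper_colourings:
  "real (card (proper_colourings (bverts T) (badj T) n))
     = poly (falling_poly (bsize T) * biclique_factor T) (real n)"
proof -
  let ?G = "inj_maps (bsize T) n"
  have "finite ?G"
    unfolding inj_maps_def by (rule finite_subset[of _ "{..<bsize T} \<rightarrow>\<^sub>E {..<n}"]) (auto intro: finite_PiE)
  moreover have "finite (triangle_colours T n g)" for g
    by (rule finite_subset[of _ "{..<n} \<times> {..<n} \<times> {..<n}"]) (auto simp: triangle_colours_def)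
  ultimately have "card (proper_colourings (bverts T) (badj T) n) = (\<Sum>g\<in>?G. card (triangle_colours T n g))"
    using bij_betw_same_card[OF colourings_decompose] by (simp add: card_SigmaI)
  then have "real (card (proper_colourings (bverts T) (badj T) n))
      = (\<Sum>g\<in>?G. real (card (triangle_colours T n g)))"
    by simp
  also have "\<dots> = real (card ?G) * poly (biclique_factor T) (real n)"
    by (simp add: card_triangle_colours)
  also have "\<dots> = poly (falling_poly (bsize T) * biclique_factor T) (real n)"
    by (simp add: card_inj_maps)
  finally show ?thesis .
qed

lemma chromatic_poly_biclique:
  "chromatic_poly (bverts T) (badj T) = falling_poly (bsize T) * biclique_factor T"
  unfolding chromatic_poly_def
  by (rule the_equality) (auto simp: card_proper_colourings intro: poly_eqI_nat)

lemma interesting_factor_biclique: "interesting_factor T = biclique_factor T"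
  unfolding interesting_factor_def chromatic_poly_biclique
proof (rule the_equality)
  fix q assume "falling_poly (bsize T) * biclique_factor T = q * falling_poly (bsize T)"
  then show "q = biclique_factor T"
    using falling_poly_nonzero[of "bsize T"] by (simp add: mult.commute)
qed (simp add: mult.commute)

lemma two_times_choose_two: "2 * real (n choose 2) = real n * (real n - 1)"
  by (induction n) (auto simp: algebra_simps numeral_2_eq_2)

lemma cubic_factor_reflection:
  fixes x r s t u v A B :: real
  assumes "2 * A = t * (t + 1)" "2 * B = (t + 1) * (t + 2)"
    and "u + v = 4 * s - 2 * r + t ^ 2 + 2 * t + 4"
  shows "cubic_factor r r s (s + A) (s + B) u x
    = - cubic_factor r r s (s + A) (s + B) v (- x + 6 * s + 2 * t ^ 2 + 4 * t + 6)"
  using assms unfolding cubic_factor_def Let_def by algebra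

theorem mainTheorem9:
  fixes r s t u v :: nat
  assumes "int u + int v = 4 * int s - 2 * int r + int t ^ 2 + 2 * int t + 4"
  shows "\<forall>x::real.
    poly (interesting_factor (r, r, s, s + (t+1 choose 2), s + (t+2 choose 2), u)) x =
    - poly (interesting_factor (r, r, s, s + (t+1 choose 2), s + (t+2 choose 2), v))
        (- x + 6 * real s + 2 * real t ^ 2 + 4 * real t + 6)"
proof
  fix x :: real
  have "real_of_int (int u + int v) = real_of_int (4 * int s - 2 * int r + int t ^ 2 + 2 * int t + 4)"
    using assms by (simp only:)
  then have uv: "real u + real v = 4 * real s - 2 * real r + real t ^ 2 + 2 * real t + 4"
    by simp
  have A: "2 * real (t + 1 choose 2) = real t * (real t + 1)"
    and B: "2 * real (t + 2 choose 2) = (real t + 1) * (real t + 2)"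
    using two_times_choose_two[of "t + 1"] two_times_choose_two[of "t + 2"] by (simp_all add: algebra_simps)
  show "poly (interesting_factor (r, r, s, s + (t+1 choose 2), s + (t+2 choose 2), u)) x =
    - poly (interesting_factor (r, r, s, s + (t+1 choose 2), s + (t+2 choose 2), v))
        (- x + 6 * real s + 2 * real t ^ 2 + 4 * real t + 6)"
    unfolding interesting_factor_biclique poly_biclique_factor of_nat_add
    by (rule cubic_factor_reflection[OF A B uv])
qed

end
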